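(* Let $\theta\in(0,1)$ and let $P_\theta=\{p_\theta(i)\}_{i\ge 0}$ be the geometric distribution $p_\theta(i)=(1-\theta)\theta^i$ on the nonnegative integers. Let $a\in\mathbb{R}_+$. If there is an integer $k\ge 1$ with $$\theta^k+\theta^{k+1}\le \frac{1}{a} < \theta^{k-1}+\theta^k,$$ then the Golomb code $\mathrm{G}k$ is an optimal code for $P_\theta$ with respect to the penalty $L_a$. If no such $k$ exists, the unary code $\mathrm{G}1$ is optimal.
   Context: A binary prefix code for the nonnegative integers assigns to each $i\ge 0$ a codeword $c(i)\in\{0,1\}^*$ such that no codeword is a prefix of another; $n(i)$ is the length of $c(i)$ and $N=\{n(i)\}$. For $a>0$, $a\ne 1$, the penalty is $L_a(P,N)=\log_a\sum_{i\ge 0}p(i)a^{n(i)}$; for $a=1$ it is the expected length $\sum_i p(i)n(i)$. A code is optimal if its lengths minimize $L_a(P,N)$ over all binary prefix codes. For an integer $k\ge 1$, let $b(x,k)$ for $0\le x<k$ denote the $(x+1)$th codeword of the complete alphabetic binary code on $k$ items, in which the first $2^{\lceil\log_2 k\rceil}-k$ items have length $\lfloor\log_2 k\rfloor$ and the remaining $2k-2^{\lceil \log_2 k\rceil}$ items have length $\lceil\log_2 k\rceil$ (for $k=1$, $b$ is the empty string). The Golomb code $\mathrm{G}k$ assigns to $j\ge 0$ the codeword $1^{\lfloor j/k\rfloor}\,0\,b(j \bmod k,k)$; $\mathrm{G}1$ is the unary code $\{1^j0\}$. *)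

theory Defs
  imports Complex_Main "HOL-Library.Sublist" "HOL-Library.Extended_Nonnegative_Real"
begin

definition prefix_code :: "(nat \<Rightarrow> bool list) \<Rightarrow> bool" where
  "prefix_code c \<longleftrightarrow> (\<forall>i j. i \<noteq> j \<longrightarrow> \<not> prefix (c i) (c j))"

text \<open>Penalty L_a(P,N), valued in the extended reals (the defining series may diverge).
  For a \<noteq> 1: log_a of sum p(i) a^n(i) (log_a of infinity is infinity, which only
  happens for a > 1); for a = 1: the expected length.\<close>
definition penalty :: "real \<Rightarrow> (nat \<Rightarrow> real) \<Rightarrow> (nat \<Rightarrow> nat) \<Rightarrow> ereal" where
  "penalty a p n =
     (if a = 1 then enn2ereal (\<Sum>i. ennreal (p i * real (n i)))
      else (let S = (\<Sum>i. ennreal (p i * a ^ n i))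
            in if S = \<infinity> then \<infinity> else ereal (log a (enn2real S))))"

definition optimal_code :: "real \<Rightarrow> (nat \<Rightarrow> real) \<Rightarrow> (nat \<Rightarrow> bool list) \<Rightarrow> bool" where
  "optimal_code a p c \<longleftrightarrow> prefix_code c \<and>
     (\<forall>c'. prefix_code c' \<longrightarrow>
        penalty a p (\<lambda>i. length (c i)) \<le> penalty a p (\<lambda>i. length (c' i)))"

definition bin :: "nat \<Rightarrow> nat \<Rightarrow> bool list" where
  "bin w v = map (\<lambda>j. odd (v div 2 ^ (w - 1 - j))) [0..<w]"

text \<open>(x+1)-th codeword of the complete alphabetic binary code on k items:
  the first 2^ceil(log2 k) - k items get floor(log2 k) bits, the rest ceil(log2 k) bits,
  codewords in lexicographic (canonical) order.\<close>
definition balph :: "nat \<Rightarrow> nat \<Rightarrow> bool list" where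
  "balph x k =
     (let m = nat \<lceil>log 2 (real k)\<rceil>; s = 2 ^ m - k
      in if x < s then bin (nat \<lfloor>log 2 (real k)\<rfloor>) x else bin m (x + s))"

definition golomb :: "nat \<Rightarrow> nat \<Rightarrow> bool list" where
  "golomb k j = replicate (j div k) True @ [False] @ balph (j mod k) k"

end

theory Submission
  imports Defs "HOL-Library.Log_Nat"
begin

text \<open>
  Write \<open>[n]\<^sub>a = 1 + a + \<dots> + a\<^sup>n\<^sup>-\<^sup>1\<close>. Since \<open>a\<^sup>n = 1 + (a - 1) [n]\<^sub>a\<close>, every penalty
  \<open>L\<^sub>a\<close> is an increasing function of the expected cost
  \<open>\<Sum>\<^sub>i p(i) [n(i)]\<^sub>a = \<Sum>\<^sub>L a\<^sup>L Pr(n(i) > L)\<close>, so it suffices to minimise the latter.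
  If a prefix code has \<open>s\<^sub>L\<close> codewords of length at most \<open>L\<close> and \<open>r\<^sub>L\<close> internal nodes at
  depth \<open>L\<close>, then \<open>Pr(n(i) > L) \<ge> \<theta>\<^sup>s\<^sub>L\<close> and \<open>(s\<^sub>L\<^sub>+\<^sub>1 - s\<^sub>L) + r\<^sub>L\<^sub>+\<^sub>1 \<le> 2 r\<^sub>L\<close>.
  The cost \<open>U(r)\<close> of the greedy tree that keeps \<open>min(2r, k)\<close> nodes internal at each level
  satisfies Bellman's inequality \<open>U(r) \<le> 1 + a \<theta>\<^sup>x U(r')\<close> whenever \<open>x + r' \<le> 2r\<close>:
  the bracketing of \<open>1/a\<close> makes \<open>U\<close> shrink at least by the factor \<open>\<theta>\<close> per step below \<open>k\<close>
  and at most by it above \<open>k\<close>. Telescoping along the levels of any prefix code bounds its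
  expected cost from below by \<open>U(1)\<close>, and the Golomb code attains \<open>U(1)\<close> because shifting
  \<open>j\<close> by \<open>k\<close> lengthens its codeword by exactly one bit.
\<close>

section \<open>The Golomb code is a prefix code\<close>

lemma prefix_nth: "prefix xs ys \<Longrightarrow> i < length xs \<Longrightarrow> xs ! i = ys ! i"
  by (auto simp: prefix_def nth_append)

lemma prefix_eq_take_length: "prefix xs ys \<Longrightarrow> xs = take (length xs) ys"
  by (auto simp: prefix_def)

lemma length_bin [simp]: "length (bin w v) = w"
  by (simp add: bin_def)

lemma nth_bin: "i < w \<Longrightarrow> bin w v ! i = odd (v div 2 ^ (w - 1 - i))"
  by (simp add: bin_def)

lemma take_bin: "j \<le> w \<Longrightarrow> take j (bin w v) = bin j (v div 2 ^ (w - j))"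
proof (rule nth_equalityI)
  fix i assume "j \<le> w" and "i < length (take j (bin w v))"
  then have i: "i < j" by simp
  then have "v div 2 ^ (w - j) div 2 ^ (j - Suc i) = v div 2 ^ (w - Suc i)"
    using \<open>j \<le> w\<close> by (simp flip: div_mult2_eq power_add)
  then show "take j (bin w v) ! i = bin j (v div 2 ^ (w - j)) ! i"
    using i \<open>j \<le> w\<close> by (simp add: nth_bin)
qed simp

lemma bin_Suc: "bin (Suc w) v = bin w (v div 2) @ [odd v]"
proof -
  have "bin (Suc w) v = take w (bin (Suc w) v) @ [bin (Suc w) v ! w]"
    by (simp add: take_Suc_conv_app_nth[symmetric])
  then show ?thesis by (simp add: take_bin nth_bin)
qed

lemma bin_inject: "v < 2 ^ w \<Longrightarrow> v' < 2 ^ w \<Longrightarrow> bin w v = bin w v' \<Longrightarrow> v = v'"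
proof (induction w arbitrary: v v')
  case (Suc w)
  then have "v div 2 = v' div 2" and "odd v = odd v'"
    by (auto simp: bin_Suc)
  then show ?case
    by (metis div_mult_mod_eq odd_iff_mod_2_eq_one parity_cases)
qed simp

lemma floor_log2_eq_ceillog2_minus_1:
  assumes "0 < k" "k < 2 ^ ceillog2 k"
  shows "nat \<lfloor>log 2 (real k)\<rfloor> = ceillog2 k - 1"
proof -
  have "floorlog 2 k = ceillog2 k"
  proof (rule antisym)
    show "floorlog 2 k \<le> ceillog2 k" using assms by (intro floorlog_leI) auto
    show "ceillog2 k \<le> floorlog 2 k"
      using assms floorlog_bounds[of k 2] by (simp add: ceillog2_le_iff less_imp_le)
  qed
  then show ?thesis using assms by (simp add: floorlog_def)
qed

lemma balph_eq:
  assumes "0 < k"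
  shows "balph x k = (if x < 2 ^ ceillog2 k - k then bin (ceillog2 k - 1) x
                      else bin (ceillog2 k) (x + (2 ^ ceillog2 k - k)))"
proof -
  have "nat \<lceil>log 2 (real k)\<rceil> = ceillog2 k" using assms by (simp add: ceillog2_def)
  moreover have "nat \<lfloor>log 2 (real k)\<rfloor> = ceillog2 k - 1" if "x < 2 ^ ceillog2 k - k"
    using assms that by (intro floor_log2_eq_ceillog2_minus_1) auto
  ultimately show ?thesis by (simp add: balph_def Let_def)
qed

lemma length_balph:
  "0 < k \<Longrightarrow> length (balph x k) = (if x < 2 ^ ceillog2 k - k then ceillog2 k - 1 else ceillog2 k)"
  by (simp add: balph_eq)

lemma balph_not_prefix:
  assumes "x < k" "y < k" "x \<noteq> y"
  shows "\<not> prefix (balph x k) (balph y k)"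
proof
  assume pre: "prefix (balph x k) (balph y k)"
  define m where "m = ceillog2 k"
  define s where "s = 2 ^ m - k"
  have k: "0 < k" using assms by simp
  have "k \<le> 2 ^ m" and "2 ^ m < 2 * k"
    using le_two_power_ceillog2 two_power_ceillog2_gt[OF k] by (simp_all add: m_def)
  then have y_s: "y + s < 2 ^ m" and x_s: "x + s < 2 ^ m" using assms by (simp_all add: s_def)
  have short: "1 \<le> m \<and> (2::nat) ^ m = 2 * 2 ^ (m - 1) \<and> s < 2 ^ (m - 1)" if "0 < s"
  proof -
    have "m \<noteq> 0" using that k by (cases m) (auto simp: s_def)
    then have "(2::nat) ^ m = 2 * 2 ^ (m - 1)" by (metis power_eq_if)
    moreover have "0 < (2::nat) ^ (m - 1)" by simp
    ultimately show ?thesis using \<open>m \<noteq> 0\<close> \<open>2 ^ m < 2 * k\<close> unfolding s_def by linarith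
  qed
  have balph: "balph z k = (if z < s then bin (m - 1) z else bin m (z + s))" for z
    using balph_eq[OF k] by (simp add: m_def s_def)
  show False
  proof (cases "x < s"; cases "y < s")
    assume "x < s" "y < s"
    then have "bin (m - 1) x = bin (m - 1) y"
      using pre prefix_eq_take_length by (fastforce simp: balph)
    moreover have "x < 2 ^ (m - 1)" "y < 2 ^ (m - 1)"
      using short \<open>x < s\<close> \<open>y < s\<close> by auto
    ultimately show False using bin_inject assms(3) by blast
  next
    assume "x < s" "\<not> y < s"
    then have "bin (m - 1) x = take (m - 1) (bin m (y + s))"
      using pre prefix_eq_take_length by (fastforce simp: balph)
    also have "\<dots> = bin (m - 1) ((y + s) div 2)"
      using short \<open>x < s\<close> by (simp add: take_bin)
    finally have "bin (m - 1) x = bin (m - 1) ((y + s) div 2)" .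
    moreover have "x < 2 ^ (m - 1)" "(y + s) div 2 < 2 ^ (m - 1)"
      using short \<open>x < s\<close> y_s by auto
    ultimately have "x = (y + s) div 2" using bin_inject by blast
    then show False using \<open>x < s\<close> \<open>\<not> y < s\<close> by simp
  next
    assume "\<not> x < s" "y < s"
    then have "length (balph x k) > length (balph y k)" using short by (simp add: balph)
    then show False using prefix_length_le[OF pre] by simp
  next
    assume "\<not> x < s" "\<not> y < s"
    then have "bin m (x + s) = bin m (y + s)"
      using pre prefix_eq_take_length by (fastforce simp: balph)
    then show False using bin_inject x_s y_s assms(3) by (metis add_right_cancel)
  qed
qed

lemma length_golomb: "length (golomb k j) = j div k + 1 + length (balph (j mod k) k)"
  by (simp add: golomb_def)

lemma length_golomb_add: "0 < k \<Longrightarrow> length (golomb k (j + k)) = Suc (length (golomb k j))"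
  by (simp add: length_golomb)

lemma length_golomb_less:
  assumes "j < k"
  shows "length (golomb k j) = (if j < 2 ^ ceillog2 k - k then ceillog2 k else Suc (ceillog2 k))"
proof -
  have "0 < ceillog2 k" if "j < 2 ^ ceillog2 k - k"
    using that assms by (cases "ceillog2 k") auto
  then show ?thesis using assms by (simp add: length_golomb length_balph)
qed

lemma prefix_code_golomb:
  assumes "0 < k"
  shows "prefix_code (golomb k)"
  unfolding prefix_code_def
proof (intro allI impI notI)
  fix i j assume "i \<noteq> j" and pre: "prefix (golomb k i) (golomb k j)"
  show False
  proof (cases "i div k" "j div k" rule: linorder_cases)
    case equal
    then have "i mod k \<noteq> j mod k" using \<open>i \<noteq> j\<close> by (metis div_mult_mod_eq)
    moreover have "prefix (balph (i mod k) k) (balph (j mod k) k)"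
      using pre equal by (simp add: golomb_def)
    ultimately show False using balph_not_prefix assms by simp
  next
    case less
    have "golomb k i ! (i div k) = golomb k j ! (i div k)"
      by (rule prefix_nth[OF pre]) (simp add: golomb_def)
    then show False using less by (simp add: golomb_def nth_append)
  next
    case greater
    have "golomb k i ! (j div k) = golomb k j ! (j div k)"
      by (rule prefix_nth[OF pre]) (use greater in \<open>simp add: golomb_def\<close>)
    then show False using greater by (simp add: golomb_def nth_append)
  qed
qed

section \<open>Counting the nodes of a prefix code\<close>

definition inner_nodes :: "(nat \<Rightarrow> bool list) \<Rightarrow> nat \<Rightarrow> bool list set" where
  "inner_nodes c L = {w. length w = L \<and> (\<exists>i. strict_prefix w (c i))}"

lemma finite_lists_of_length_le: "finite {w :: bool list. length w \<le> L}"
  using finite_lists_length_le[of "UNIV :: bool set" L] by simp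

lemma finite_inner_nodes: "finite (inner_nodes c L)"
  by (rule finite_subset[OF _ finite_lists_of_length_le[of L]]) (auto simp: inner_nodes_def)

lemma inner_nodes_subset_snoc:
  "{w. length w = Suc L \<and> (\<exists>i. prefix w (c i))} \<subseteq> (\<lambda>(u, b). u @ [b]) ` (inner_nodes c L \<times> UNIV)"
proof
  fix w assume "w \<in> {w. length w = Suc L \<and> (\<exists>i. prefix w (c i))}"
  then obtain i where len: "length w = Suc L" and pre: "prefix w (c i)" by blast
  have "strict_prefix (butlast w) w"
    using len by (simp add: strict_prefix_def prefixeq_butlast) (metis length_butlast n_not_Suc_n diff_Suc_1)
  then have "strict_prefix (butlast w) (c i)" using pre by (rule prefix_order.less_le_trans)
  moreover have "w = butlast w @ [last w]" using len by (cases w rule: rev_cases) auto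
  ultimately show "w \<in> (\<lambda>(u, b). u @ [b]) ` (inner_nodes c L \<times> UNIV)"
    using len by (auto simp: inner_nodes_def intro!: image_eqI[of _ _ "(butlast w, last w)"])
qed

context
  fixes c :: "nat \<Rightarrow> bool list"
  assumes pc: "prefix_code c"
begin

lemma prefix_code_inj: "inj c"
  using pc by (metis injI prefix_code_def prefix_order.order_refl)

lemma prefix_code_not_strict_prefix: "\<not> strict_prefix (c i) (c j)"
  using pc by (metis prefix_code_def prefix_order.less_imp_le prefix_order.less_irrefl)

lemma finite_codewords_length_le: "finite {i. length (c i) \<le> L}"
proof -
  have "c ` {i. length (c i) \<le> L} \<subseteq> {w. length w \<le> L}" by auto
  then show ?thesis
    using finite_lists_of_length_le prefix_code_inj
    by (metis finite_imageD finite_subset inj_on_subset subset_UNIV)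
qed

lemma inner_nodes_nonempty: "inner_nodes c L \<noteq> {}"
proof -
  obtain i where "\<not> length (c i) \<le> L"
    using finite_codewords_length_le[of L] by (metis (mono_tags) infinite_UNIV_nat mem_Collect_eq
        ex_new_if_finite)
  then have "length (take L (c i)) = L" and "strict_prefix (take L (c i)) (c i)"
    by (auto simp: strict_prefix_def take_is_prefix)
  then have "take L (c i) \<in> inner_nodes c L" by (auto simp: inner_nodes_def)
  then show ?thesis by blast
qed

lemma card_inner_nodes_pos: "0 < card (inner_nodes c L)"
  using inner_nodes_nonempty finite_inner_nodes by (simp add: card_gt_0_iff)

lemma card_inner_nodes_0: "card (inner_nodes c 0) = 1"
proof -
  have "inner_nodes c 0 = {[]}" using inner_nodes_nonempty[of 0] by (auto simp: inner_nodes_def)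
  then show ?thesis by simp
qed

lemma prefix_code_Nil: "c i \<noteq> []"
  using pc unfolding prefix_code_def by (metis Nil_prefix n_not_Suc_n)

lemma finite_codewords_length_eq: "finite {i. length (c i) = L}"
  using finite_codewords_length_le[of L] by (auto elim: rev_finite_subset)

lemma card_codewords_length_le_Suc:
  "card {i. length (c i) \<le> Suc L} = card {i. length (c i) \<le> L} + card {i. length (c i) = Suc L}"
proof -
  have "{i. length (c i) \<le> Suc L} = {i. length (c i) \<le> L} \<union> {i. length (c i) = Suc L}"
    by auto
  then show ?thesis
    using finite_codewords_length_le finite_codewords_length_eq
    by (subst card_Un_disjoint[symmetric]) auto
qed

lemma card_new_codewords_inner_nodes:
  "card {i. length (c i) = Suc L} + card (inner_nodes c (Suc L)) \<le> 2 * card (inner_nodes c L)"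
proof -
  let ?E = "{i. length (c i) = Suc L}"
  have disjoint: "c ` ?E \<inter> inner_nodes c (Suc L) = {}"
    using prefix_code_not_strict_prefix by (auto simp: inner_nodes_def)
  have "card ?E + card (inner_nodes c (Suc L)) = card (c ` ?E \<union> inner_nodes c (Suc L))"
    using finite_codewords_length_eq finite_inner_nodes disjoint prefix_code_inj
    by (simp add: card_Un_disjoint card_image inj_on_subset)
  also have "\<dots> \<le> card ((\<lambda>(u, b). u @ [b]) ` (inner_nodes c L \<times> UNIV))"
  proof (rule card_mono)
    show "finite ((\<lambda>(u, b). u @ [b]) ` (inner_nodes c L \<times> (UNIV :: bool set)))"
      using finite_inner_nodes by simp
    have "c ` ?E \<union> inner_nodes c (Suc L) \<subseteq> {w. length w = Suc L \<and> (\<exists>i. prefix w (c i))}"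
      by (auto simp: inner_nodes_def strict_prefix_def)
    then show "c ` ?E \<union> inner_nodes c (Suc L) \<subseteq> (\<lambda>(u, b). u @ [b]) ` (inner_nodes c L \<times> UNIV)"
      using inner_nodes_subset_snoc by blast
  qed
  also have "\<dots> \<le> card (inner_nodes c L \<times> (UNIV :: bool set))"
    using finite_inner_nodes by (intro card_image_le) simp
  finally show ?thesis by (simp add: card_cartesian_product)
qed

end

definition geom_sum :: "real \<Rightarrow> nat \<Rightarrow> real" where
  "geom_sum a n = (\<Sum>L<n. a ^ L)"

lemma geom_sum_0 [simp]: "geom_sum a 0 = 0"
  by (simp add: geom_sum_def)

lemma geom_sum_1 [simp]: "geom_sum 1 n = real n"
  by (simp add: geom_sum_def)

lemma geom_sum_Suc: "geom_sum a (Suc n) = geom_sum a n + a ^ n"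
  by (simp add: geom_sum_def)

lemma geom_sum_Suc_shift: "geom_sum a (Suc n) = 1 + a * geom_sum a n"
  unfolding geom_sum_def sum.lessThan_Suc_shift by (simp add: sum_distrib_left)

lemma power_eq_geom_sum: "a ^ n = 1 + (a - 1) * geom_sum a n"
  using power_diff_1_eq[of a n] by (simp add: geom_sum_def)

lemma geom_sum_nonneg: "0 \<le> a \<Longrightarrow> 0 \<le> geom_sum a n"
  by (simp add: geom_sum_def sum_nonneg)

lemma sum_lessThan_if_le_geom_sum:
  assumes "0 \<le> a" "0 \<le> p"
  shows "(\<Sum>L<M. a ^ L * (if L < n then p else 0)) \<le> p * geom_sum a n"
proof -
  have "(\<Sum>L<M. a ^ L * (if L < n then p else 0)) = (\<Sum>L<M. if L \<in> {..<n} then p * a ^ L else 0)"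
    by (intro sum.cong) auto
  also have "\<dots> = (\<Sum>L\<in>{..<M} \<inter> {..<n}. p * a ^ L)"
    by (rule sum.inter_restrict[symmetric]) simp
  also have "\<dots> \<le> (\<Sum>L<n. p * a ^ L)"
    using assms by (intro sum_mono2) auto
  finally show ?thesis by (simp add: geom_sum_def sum_distrib_left)
qed

lemma sum_lessThan_add_shift: "(\<Sum>j<m + n. f j) = (\<Sum>j<m. f j) + (\<Sum>j<n. f (j + m))"
  for f :: "nat \<Rightarrow> 'a::comm_monoid_add"
  by (induction n) (simp_all add: ac_simps)

lemma geometric_partial_sum: "(\<Sum>j<n. (1 - q) * q ^ j) = 1 - (q :: real) ^ n"
  by (simp add: one_diff_power_eq sum_distrib_left)

lemma geometric_sum_atLeastLessThan:
  "s \<le> k \<Longrightarrow> (\<Sum>j\<in>{s..<k}. (1 - q) * q ^ j) = q ^ s - (q :: real) ^ k"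
  using sum.atLeastLessThan_concat[of 0 s k "\<lambda>j. (1 - q) * q ^ j"]
  by (simp add: atLeast0LessThan geometric_partial_sum)

lemma geometric_distribution_sums: "\<bar>q :: real\<bar> < 1 \<Longrightarrow> (\<lambda>i. (1 - q) * q ^ i) sums 1"
  using sums_mult[OF geometric_sums[of q], of "1 - q"] by (simp split: if_splits)

lemma sum_antimono_le_sum_lessThan_card:
  fixes f :: "nat \<Rightarrow> real"
  assumes antimono: "\<And>i j. i \<le> j \<Longrightarrow> f j \<le> f i" and "finite A"
  shows "(\<Sum>i\<in>A. f i) \<le> (\<Sum>i<card A. f i)"
  using \<open>finite A\<close>
proof (induction "card A" arbitrary: A)
  case (Suc n)
  define M where "M = Max A"
  have "A \<noteq> {}" using Suc.hyps by auto
  then have "M \<in> A" using Suc.prems by (simp add: M_def)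
  have "card A \<le> card {..M}" using Suc.prems \<open>A \<noteq> {}\<close> by (intro card_mono) (auto simp: M_def)
  then have "n \<le> M" using Suc.hyps by simp
  have "card (A - {M}) = n"
    using Suc.hyps(2) Suc.prems \<open>M \<in> A\<close> by simp
  then have IH: "(\<Sum>i\<in>A - {M}. f i) \<le> (\<Sum>i<n. f i)"
    using Suc.hyps(1)[of "A - {M}"] Suc.prems by simp
  have "(\<Sum>i\<in>A. f i) = f M + (\<Sum>i\<in>A - {M}. f i)" using Suc.prems \<open>M \<in> A\<close> by (rule sum.remove)
  also have "\<dots> \<le> f n + (\<Sum>i<n. f i)" using IH antimono \<open>n \<le> M\<close> by (intro add_mono)
  finally show ?case using Suc.hyps(2)[symmetric] by simp
qed simp

text \<open>The mass of a geometric distribution outside \<open>A\<close> is smallest when \<open>A\<close> is an initial segment.\<close>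

lemma geometric_mass_outside:
  fixes q :: real
  assumes "0 < q" "q < 1" "finite A"
  shows "(\<lambda>i. if i \<notin> A then (1 - q) * q ^ i else 0) sums (1 - (\<Sum>i\<in>A. (1 - q) * q ^ i))"
    and "q ^ card A \<le> 1 - (\<Sum>i\<in>A. (1 - q) * q ^ i)"
proof -
  have "(\<lambda>i. (1 - q) * q ^ i) sums 1"
    by (rule geometric_distribution_sums) (use assms in auto)
  then have "(\<lambda>i. if i \<in> A then 0 else (1 - q) * q ^ i) sums (1 - (\<Sum>i\<in>A. (1 - q) * q ^ i))"
    by (rule sums_If_finite_set'[OF _ \<open>finite A\<close>]) (simp add: sum_negf)
  moreover have "(\<lambda>i. if i \<in> A then 0 else (1 - q) * q ^ i) = (\<lambda>i. if i \<notin> A then (1 - q) * q ^ i else 0)"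
    by auto
  ultimately show "(\<lambda>i. if i \<notin> A then (1 - q) * q ^ i else 0) sums (1 - (\<Sum>i\<in>A. (1 - q) * q ^ i))"
    by simp
  have "(\<Sum>i\<in>A. (1 - q) * q ^ i) \<le> (\<Sum>i<card A. (1 - q) * q ^ i)"
    using assms by (intro sum_antimono_le_sum_lessThan_card mult_left_mono power_decreasing) auto
  also have "\<dots> = 1 - q ^ card A"
    by (rule geometric_partial_sum)
  finally show "q ^ card A \<le> 1 - (\<Sum>i\<in>A. (1 - q) * q ^ i)" by simp
qed

lemma level_sum_le_expected_cost:
  fixes n :: "nat \<Rightarrow> nat"
  assumes "0 < q" "q < 1" "0 \<le> a" and fin: "\<And>L. finite {i. n i \<le> L}"
    and summable: "summable (\<lambda>i. (1 - q) * q ^ i * geom_sum a (n i))"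
  shows "(\<Sum>L<M. a ^ L * q ^ card {i. n i \<le> L}) \<le> (\<Sum>i. (1 - q) * q ^ i * geom_sum a (n i))"
proof -
  define tail where "tail L = 1 - (\<Sum>i\<in>{i. n i \<le> L}. (1 - q) * q ^ i)" for L
  have tail_sums: "(\<lambda>i. a ^ L * (if L < n i then (1 - q) * q ^ i else 0)) sums (a ^ L * tail L)" for L
    using sums_mult[OF geometric_mass_outside(1)[OF \<open>0 < q\<close> \<open>q < 1\<close> fin], of "a ^ L"]
    by (simp add: tail_def if_distrib[of "\<lambda>x. _ * x"] not_le cong: if_cong)
  have "(\<Sum>L<M. a ^ L * q ^ card {i. n i \<le> L}) \<le> (\<Sum>L<M. a ^ L * tail L)"
    using geometric_mass_outside(2)[OF \<open>0 < q\<close> \<open>q < 1\<close> fin] assms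
    by (intro sum_mono mult_left_mono) (auto simp: tail_def)
  also have "\<dots> \<le> (\<Sum>i. (1 - q) * q ^ i * geom_sum a (n i))"
  proof (rule sums_le[OF _ sums_sum summable_sums[OF summable]])
    show "(\<Sum>L<M. a ^ L * (if L < n i then (1 - q) * q ^ i else 0)) \<le> (1 - q) * q ^ i * geom_sum a (n i)"
      for i using assms by (intro sum_lessThan_if_le_geom_sum) auto
  qed (rule tail_sums)
  finally show ?thesis .
qed

section \<open>The greedy cost\<close>

lemma decay_le_power:
  fixes f :: "nat \<Rightarrow> real"
  assumes decay: "\<And>t. j \<le> t \<Longrightarrow> t < n \<Longrightarrow> f (Suc t) \<le> q * f t" and "0 \<le> q" and "j \<le> n"
  shows "f n \<le> q ^ (n - j) * f j"
  using \<open>j \<le> n\<close>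
proof (induction n rule: dec_induct)
  case (step t)
  then have "f (Suc t) \<le> q * (q ^ (t - j) * f j)"
    using decay[of t] \<open>0 \<le> q\<close> by (meson mult_left_mono order_trans)
  then show ?case using \<open>j \<le> t\<close> by (simp add: Suc_diff_le)
qed simp

lemma growth_ge_power:
  fixes f :: "nat \<Rightarrow> real"
  assumes growth: "\<And>t. j \<le> t \<Longrightarrow> t < n \<Longrightarrow> q * f t \<le> f (Suc t)" and "0 \<le> q" and "j \<le> n"
  shows "q ^ (n - j) * f j \<le> f n"
  using \<open>j \<le> n\<close>
proof (induction n rule: dec_induct)
  case (step t)
  then have "q * (q ^ (t - j) * f j) \<le> f (Suc t)"
    using growth[of t] \<open>0 \<le> q\<close> by (meson mult_left_mono order_trans)
  then show ?case using \<open>j \<le> t\<close> by (simp add: Suc_diff_le)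
qed simp

text \<open>\<open>greedy_cost q a k r\<close> is the cost \<open>\<Sum>\<^sub>L a\<^sup>L q\<^sup>s\<^sub>L\<close> of the code tree that starts with \<open>r\<close>
  internal nodes and at every level keeps \<open>min (2r) k\<close> children internal, turning the others
  into leaves; \<open>s\<^sub>L\<close> counts the leaves in its first \<open>L\<close> levels. From \<open>r = k\<close> on the tree is
  self-similar, whence the fixed point \<open>1 / (1 - a q\<^sup>k)\<close>. The case \<open>r = 0\<close> is junk; it only
  makes the recursion terminate.\<close>

function greedy_cost :: "real \<Rightarrow> real \<Rightarrow> nat \<Rightarrow> nat \<Rightarrow> real" where
  "greedy_cost q a k r =
     (if r = 0 \<or> k \<le> r then 1 + a * q ^ (2 * r - k) / (1 - a * q ^ k)
      else 1 + a * q ^ (2 * r - min (2 * r) k) * greedy_cost q a k (min (2 * r) k))"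
  by auto
termination by (relation "measure (\<lambda>(q, a, k, r). k - r)") auto

declare greedy_cost.simps [simp del]

text \<open>The upper bound on \<open>a\<close> is only needed for \<open>k \<ge> 2\<close>; dropping it for \<open>k = 1\<close> covers the
  unary code when no \<open>k\<close> brackets \<open>1/a\<close>.\<close>

locale golomb_regime =
  fixes q a :: real and k :: nat
  assumes q_pos: "0 < q" and q_less_1: "q < 1" and a_pos: "0 < a" and k_pos: "0 < k"
    and lower: "a * (q ^ k + q ^ (k + 1)) \<le> 1"
    and upper: "k = 1 \<or> 1 \<le> a * (q ^ (k - 1) + q ^ k)"
begin

abbreviation U :: "nat \<Rightarrow> real" where "U \<equiv> greedy_cost q a k"

lemma denom_pos: "0 < 1 - a * q ^ k"
proof -
  have "0 < a * q ^ (k + 1)" using a_pos q_pos by simp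
  then show ?thesis using lower by (simp add: algebra_simps)
qed

lemma greedy_cost_ge_1: "1 \<le> U r"
proof (induction "k - r" arbitrary: r rule: less_induct)
  case less
  show ?case
  proof (cases "r = 0 \<or> k \<le> r")
    case True
    then show ?thesis using denom_pos a_pos q_pos by (simp add: greedy_cost.simps)
  next
    case False
    then have "1 \<le> U (min (2 * r) k)" by (intro less) auto
    then show ?thesis using False a_pos q_pos by (subst greedy_cost.simps) simp
  qed
qed

lemma greedy_cost_rec: "0 < r \<Longrightarrow> U r = 1 + a * q ^ (2 * r - min (2 * r) k) * U (min (2 * r) k)"
proof (cases "k \<le> r")
  case True
  then have "U k = 1 / (1 - a * q ^ k)" and "min (2 * r) k = k"
    using denom_pos k_pos by (auto simp: greedy_cost.simps field_simps mult_2)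
  then show ?thesis using True by (simp add: greedy_cost.simps[of _ _ _ r])
qed (simp add: greedy_cost.simps[of _ _ _ r])

lemma greedy_cost_closed: "k \<le> 2 * r \<Longrightarrow> U r = 1 + a * q ^ (2 * r - k) / (1 - a * q ^ k)"
  using greedy_cost_rec[of r] greedy_cost_rec[of k] k_pos denom_pos
  by (simp add: greedy_cost.simps[of _ _ _ k] field_simps)

lemma greedy_cost_k: "U k = 1 / (1 - a * q ^ k)"
  using greedy_cost_closed[of k] denom_pos by (simp add: field_simps)

lemma greedy_cost_Suc_minus:
  assumes "k \<le> 2 * r"
  shows "U (Suc r) - q * U r = (1 - q) * (1 - a * q ^ (2 * r - k + 1) / (1 - a * q ^ k))"
proof -
  define e where "e = 2 * r - k"
  define D where "D = 1 - a * q ^ k"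
  have "U r = 1 + a * q ^ e / D" and "U (Suc r) = 1 + a * q ^ e * q\<^sup>2 / D"
    using assms greedy_cost_closed[of r] greedy_cost_closed[of "Suc r"]
    by (simp_all add: e_def D_def Suc_diff_le flip: power_add)
  then have "U (Suc r) - q * U r = (1 + a * q ^ e * q\<^sup>2 / D) - q * (1 + a * q ^ e / D)"
    by simp
  also have "\<dots> = (1 - q) * (1 - a * q ^ (e + 1) / D)"
    using denom_pos unfolding D_def[symmetric] by (simp add: field_simps power2_eq_square)
  finally show ?thesis by (simp add: e_def D_def)
qed

lemma greedy_cost_increase:
  assumes "k \<le> r"
  shows "q * U r \<le> U (Suc r)"
proof -
  have "a * q ^ (2 * r - k + 1) \<le> a * q ^ (k + 1)"
    using assms q_pos q_less_1 a_pos by (intro mult_left_mono power_decreasing) auto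
  also have "\<dots> \<le> 1 - a * q ^ k"
    using lower by (simp add: algebra_simps)
  finally have "a * q ^ (2 * r - k + 1) \<le> 1 - a * q ^ k" .
  then have "0 \<le> (1 - q) * (1 - a * q ^ (2 * r - k + 1) / (1 - a * q ^ k))"
    using denom_pos q_less_1 by simp
  then show ?thesis using greedy_cost_Suc_minus[of r] assms by linarith
qed

lemma greedy_cost_decrease_closed:
  assumes "0 < r" "r < k" "k \<le> 2 * r"
  shows "U (Suc r) \<le> q * U r"
proof -
  have "1 - a * q ^ k \<le> a * q ^ (k - 1)"
    using upper assms by (auto simp: algebra_simps)
  also have "\<dots> \<le> a * q ^ (2 * r - k + 1)"
    using assms q_pos q_less_1 a_pos by (intro mult_left_mono power_decreasing) auto
  finally have "(1 - q) * (1 - a * q ^ (2 * r - k + 1) / (1 - a * q ^ k)) \<le> 0"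
    using denom_pos q_less_1 by (intro mult_nonneg_nonpos) (auto simp: field_simps)
  then show ?thesis using greedy_cost_Suc_minus[OF assms(3)] by linarith
qed

lemma one_le_greedy_cost_k:
  assumes "2 \<le> k"
  shows "1 \<le> a * q * U k"
proof -
  have "1 - a * q ^ k \<le> a * q ^ (k - 1)"
    using upper assms by (auto simp: algebra_simps)
  also have "\<dots> \<le> a * q"
    using a_pos q_pos q_less_1 assms power_decreasing[of 1 "k - 1" q] by (intro mult_left_mono) auto
  finally have "1 \<le> a * q / (1 - a * q ^ k)"
    using denom_pos by (simp add: le_divide_eq)
  then show ?thesis by (simp add: greedy_cost_k)
qed

lemma greedy_cost_decrease_doubling:
  assumes "0 < r" "2 * r < k" and decrease: "\<And>t. r < t \<Longrightarrow> t < k \<Longrightarrow> U (Suc t) \<le> q * U t"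
  shows "U (Suc r) \<le> q * U r"
proof -
  have rec_r: "U r = 1 + a * U (2 * r)" using greedy_cost_rec[of r] assms by simp
  have next_le: "U (Suc r) \<le> 1 + a * (q ^ 2 * U (2 * r))"
  proof (cases "2 * r + 2 \<le> k")
    case True
    have "U (Suc (Suc (2 * r))) \<le> q * U (Suc (2 * r))"
      using decrease True assms by auto
    also have "\<dots> \<le> q * (q * U (2 * r))"
      using decrease assms q_pos by (intro mult_left_mono) auto
    finally have "U (Suc (Suc (2 * r))) \<le> q ^ 2 * U (2 * r)"
      by (simp add: power2_eq_square)
    then show ?thesis
      using greedy_cost_rec[of "Suc r"] True a_pos by simp
  next
    case False
    then have "k = Suc (2 * r)" using assms by simp
    moreover have "U (Suc (2 * r)) \<le> q * U (2 * r)" using decrease assms \<open>k = Suc (2 * r)\<close> by simp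
    ultimately show ?thesis
      using greedy_cost_rec[of "Suc r"] a_pos q_pos
      by (simp add: power2_eq_square mult.assoc mult_left_mono)
  qed
  have "U k \<le> q ^ (k - 2 * r) * U (2 * r)"
    using assms q_pos by (intro decay_le_power[where f = U]) auto
  also have "\<dots> \<le> U (2 * r)"
    using greedy_cost_ge_1[of "2 * r"] q_pos q_less_1 by (intro mult_left_le_one_le power_le_one) auto
  finally have "a * q * U k \<le> a * q * U (2 * r)"
    using a_pos q_pos by (intro mult_left_mono) auto
  moreover have "1 \<le> a * q * U k"
    using assms by (intro one_le_greedy_cost_k) auto
  ultimately have "1 \<le> a * q * U (2 * r)" by linarith
  then have "(1 - q) * 1 \<le> (1 - q) * (a * q * U (2 * r))"
    using q_less_1 by (intro mult_left_mono) auto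
  then show ?thesis using next_le rec_r by (simp add: algebra_simps power2_eq_square)
qed

lemma greedy_cost_decrease: "0 < r \<Longrightarrow> r < k \<Longrightarrow> U (Suc r) \<le> q * U r"
proof (induction "k - r" arbitrary: r rule: less_induct)
  case less
  show ?case
  proof (cases "k \<le> 2 * r")
    case True
    then show ?thesis using greedy_cost_decrease_closed less.prems by blast
  next
    case False
    show ?thesis
    proof (rule greedy_cost_decrease_doubling)
      show "U (Suc t) \<le> q * U t" if "r < t" "t < k" for t
        using less.hyps[of t] that less.prems by simp
    qed (use less.prems False in auto)
  qed
qed

lemma greedy_cost_decay: "0 < j \<Longrightarrow> j \<le> t \<Longrightarrow> t \<le> k \<Longrightarrow> U t \<le> q ^ (t - j) * U j"
  using greedy_cost_decrease q_pos by (intro decay_le_power) auto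

lemma greedy_cost_growth: "k \<le> j \<Longrightarrow> j \<le> t \<Longrightarrow> q ^ (t - j) * U j \<le> U t"
  using greedy_cost_increase q_pos by (intro growth_ge_power) auto

text \<open>Bellman's inequality: from \<open>r\<close> internal nodes, no choice of \<open>x\<close> leaves and \<open>r'\<close> internal
  nodes on the next level beats the greedy choice.\<close>

lemma greedy_cost_le_step:
  assumes "0 < r" "0 < r'" "x + r' \<le> 2 * r"
  shows "U r \<le> 1 + a * q ^ x * U r'"
proof -
  define p where "p = min (2 * r) k"
  have "q ^ (2 * r - p) * U p \<le> q ^ (2 * r - r') * U r'"
  proof (cases "r' \<le> p")
    case True
    have "q ^ (2 * r - p) * U p \<le> q ^ (2 * r - p) * (q ^ (p - r') * U r')"
      using greedy_cost_decay[of r' p] True assms q_pos by (intro mult_left_mono) (auto simp: p_def)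
    also have "\<dots> = q ^ (2 * r - r') * U r'"
      using True by (simp add: p_def mult.assoc flip: power_add)
    finally show ?thesis .
  next
    case False
    then have "p = k" using assms by (auto simp: p_def)
    have "q ^ (2 * r - p) * U p = q ^ (2 * r - r') * (q ^ (r' - k) * U k)"
      using False assms \<open>p = k\<close> by (simp add: mult.assoc flip: power_add)
    also have "\<dots> \<le> q ^ (2 * r - r') * U r'"
      using greedy_cost_growth[of k r'] False \<open>p = k\<close> q_pos by (intro mult_left_mono) auto
    finally show ?thesis .
  qed
  also have "\<dots> \<le> q ^ x * U r'"
    using assms q_pos q_less_1 greedy_cost_ge_1[of r']
    by (intro mult_right_mono power_decreasing) auto
  finally have "a * (q ^ (2 * r - p) * U p) \<le> a * (q ^ x * U r')"
    using a_pos by simp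
  then show ?thesis
    using greedy_cost_rec[OF \<open>0 < r\<close>] by (simp add: p_def mult.assoc)
qed

lemma greedy_cost_bounded: "0 < r \<Longrightarrow> U r \<le> 1 + a * U 1"
  using greedy_cost_le_step[of r 1 0] by simp

subsection \<open>Lower bound for every prefix code\<close>

lemma greedy_cost_telescope:
  assumes "prefix_code c"
  shows "U 1 \<le> (\<Sum>L<M. a ^ L * q ^ card {i. length (c i) \<le> L})
                + a ^ M * q ^ card {i. length (c i) \<le> M} * U (card (inner_nodes c M))"
proof (induction M)
  case 0
  then show ?case using card_inner_nodes_0[OF assms] prefix_code_Nil[OF assms] by simp
next
  case (Suc M)
  let ?s = "\<lambda>L. card {i. length (c i) \<le> L}" and ?r = "\<lambda>L. card (inner_nodes c L)"
  have "?s (Suc M) - ?s M + ?r (Suc M) \<le> 2 * ?r M"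
    using card_codewords_length_le_Suc[OF assms] card_new_codewords_inner_nodes[OF assms] by simp
  then have "U (?r M) \<le> 1 + a * q ^ (?s (Suc M) - ?s M) * U (?r (Suc M))"
    using card_inner_nodes_pos[OF assms] by (intro greedy_cost_le_step) auto
  then have "a ^ M * q ^ ?s M * U (?r M)
      \<le> a ^ M * q ^ ?s M * (1 + a * q ^ (?s (Suc M) - ?s M) * U (?r (Suc M)))"
    using a_pos q_pos by (intro mult_left_mono) auto
  also have "\<dots> = a ^ M * q ^ ?s M + a ^ Suc M * q ^ ?s (Suc M) * U (?r (Suc M))"
    using card_codewords_length_le_Suc[OF assms, of M]
    by (simp add: algebra_simps power_add[symmetric])
  finally show ?case using Suc.IH by simp
qed

theorem greedy_cost_le_expected_cost:
  assumes "prefix_code c" and summable: "summable (\<lambda>i. (1 - q) * q ^ i * geom_sum a (length (c i)))"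
  shows "U 1 \<le> (\<Sum>i. (1 - q) * q ^ i * geom_sum a (length (c i)))"
proof -
  define C where "C = (\<Sum>i. (1 - q) * q ^ i * geom_sum a (length (c i)))"
  define t where "t L = a ^ L * q ^ card {i. length (c i) \<le> L}" for L
  have partial: "(\<Sum>L<M. t L) \<le> C" for M
    unfolding t_def C_def using q_pos q_less_1 a_pos finite_codewords_length_le[OF assms(1)]
    by (intro level_sum_le_expected_cost summable) auto
  have "summable t"
    using partial a_pos q_pos by (intro summableI_nonneg_bounded[of t C]) (auto simp: t_def)
  then have "(\<lambda>M. (1 + a * U 1) * t M) \<longlonglongrightarrow> 0"
    using tendsto_mult_right_zero summable_LIMSEQ_zero by blast
  moreover have "U 1 - C \<le> (1 + a * U 1) * t M" for M
  proof -
    have "U 1 \<le> (\<Sum>L<M. t L) + t M * U (card (inner_nodes c M))"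
      using greedy_cost_telescope[OF assms(1)] by (simp add: t_def)
    also have "\<dots> \<le> C + t M * (1 + a * U 1)"
      using partial greedy_cost_bounded card_inner_nodes_pos[OF assms(1)] a_pos q_pos
      by (intro add_mono mult_left_mono) (auto simp: t_def)
    finally show ?thesis by (simp add: algebra_simps)
  qed
  ultimately have "U 1 - C \<le> 0"
    by (intro LIMSEQ_le_const[of "\<lambda>M. (1 + a * U 1) * t M"]) auto
  then show ?thesis by (simp add: C_def)
qed

subsection \<open>The Golomb code attains the bound\<close>

lemma greedy_cost_doubling: "2 ^ j < k \<Longrightarrow> U 1 = geom_sum a j + a ^ j * U (2 ^ j)"
proof (induction j)
  case (Suc j)
  then have "U (2 ^ j) = 1 + a * U (2 ^ Suc j)"
    using greedy_cost_rec[of "2 ^ j"] by simp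
  then show ?case
    using Suc by (simp add: geom_sum_Suc algebra_simps)
qed simp

lemma greedy_cost_1:
  "U 1 = geom_sum a (ceillog2 k) + a ^ ceillog2 k * q ^ (2 ^ ceillog2 k - k) * U k"
proof (cases "k = 1")
  case False
  define m where "m = ceillog2 k"
  have "0 < m" using False k_pos ceillog2_le_iff[of k 0] by (simp add: m_def)
  have "k \<le> 2 ^ m" "2 ^ m < 2 * k"
    using le_two_power_ceillog2 two_power_ceillog2_gt[OF k_pos] by (simp_all add: m_def)
  moreover have pow: "(2::nat) ^ m = 2 * 2 ^ (m - 1)" using \<open>0 < m\<close> by (metis power_eq_if neq0_conv)
  ultimately have "2 ^ (m - 1) < k" and "k \<le> 2 * 2 ^ (m - 1)" by simp_all
  then have "U (2 ^ (m - 1)) = 1 + a * q ^ (2 ^ m - k) * U k"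
    using greedy_cost_rec[of "2 ^ (m - 1)"] pow by simp
  moreover have "U 1 = geom_sum a (m - 1) + a ^ (m - 1) * U (2 ^ (m - 1))"
    using greedy_cost_doubling \<open>2 ^ (m - 1) < k\<close> by blast
  ultimately show ?thesis
    using \<open>0 < m\<close> geom_sum_Suc[of a "m - 1"]
    by (simp add: m_def[symmetric] algebra_simps power_eq_if[of a m])
qed simp

abbreviation golomb_term :: "nat \<Rightarrow> real" where
  "golomb_term j \<equiv> (1 - q) * q ^ j * geom_sum a (length (golomb k j))"

lemma golomb_first_block: "(\<Sum>j<k. golomb_term j) + q ^ k = (1 - a * q ^ k) * U 1"
proof -
  define m where "m = ceillog2 k"
  define s where "s = 2 ^ m - k"
  define G where "G = geom_sum a m"
  have "s \<le> k" using two_power_ceillog2_gt[OF k_pos] by (simp add: s_def m_def)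
  have "golomb_term j = (1 - q) * q ^ j * G + a ^ m * (if j \<in> {s..} then (1 - q) * q ^ j else 0)"
    if "j < k" for j
    using length_golomb_less[OF that] by (simp add: G_def m_def s_def geom_sum_Suc algebra_simps)
  then have "(\<Sum>j<k. golomb_term j)
      = (\<Sum>j<k. (1 - q) * q ^ j) * G + a ^ m * (\<Sum>j<k. if j \<in> {s..} then (1 - q) * q ^ j else 0)"
    by (simp add: sum.distrib sum_distrib_left sum_distrib_right)
  also have "(\<Sum>j<k. if j \<in> {s..} then (1 - q) * q ^ j else 0) = q ^ s - q ^ k"
  proof -
    have "{..<k} \<inter> {s..} = {s..<k}" by auto
    then show ?thesis
      using sum.inter_restrict[of "{..<k}" "\<lambda>j. (1 - q) * q ^ j" "{s..}"]
        geometric_sum_atLeastLessThan[OF \<open>s \<le> k\<close>, of q]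
      by simp
  qed
  also have "(\<Sum>j<k. (1 - q) * q ^ j) = 1 - q ^ k"
    by (rule geometric_partial_sum)
  finally have "(\<Sum>j<k. golomb_term j) + q ^ k = (1 - a * q ^ k) * G + a ^ m * q ^ s"
    by (simp add: G_def algebra_simps power_eq_geom_sum[of a m])
  then show ?thesis
    using greedy_cost_1 greedy_cost_k denom_pos by (simp add: m_def s_def G_def field_simps)
qed

lemma golomb_term_add: "golomb_term (j + k) = q ^ k * ((1 - q) * q ^ j) + a * q ^ k * golomb_term j"
  using length_golomb_add[OF k_pos, of j] by (simp add: geom_sum_Suc_shift power_add algebra_simps)

lemma golomb_blocks_le: "(\<Sum>j<N * k. golomb_term j) \<le> U 1"
proof (induction N)
  case 0
  then show ?case using greedy_cost_ge_1[of 1] by simp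
next
  case (Suc N)
  have "(\<Sum>j<Suc N * k. golomb_term j) = (\<Sum>j<k. golomb_term j) + (\<Sum>j<N * k. golomb_term (j + k))"
    by (simp add: sum_lessThan_add_shift)
  also have "(\<Sum>j<N * k. golomb_term (j + k))
      = q ^ k * (1 - q ^ (N * k)) + a * q ^ k * (\<Sum>j<N * k. golomb_term j)"
    by (simp add: golomb_term_add sum.distrib sum_distrib_left[symmetric] one_diff_power_eq)
  also have "\<dots> \<le> q ^ k + a * q ^ k * U 1"
    using Suc.IH a_pos q_pos by (intro add_mono mult_left_mono) auto
  finally show ?case
    using golomb_first_block by (simp add: algebra_simps)
qed

theorem golomb_expected_cost:
  "summable golomb_term \<and> (\<Sum>j. golomb_term j) \<le> U 1"
proof -
  have nonneg: "0 \<le> golomb_term j" for j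
    using q_pos q_less_1 a_pos geom_sum_nonneg by simp
  have bounded: "(\<Sum>j<n. golomb_term j) \<le> U 1" for n
  proof -
    have "(\<Sum>j<n. golomb_term j) \<le> (\<Sum>j<n * k. golomb_term j)"
      using k_pos nonneg by (intro sum_mono2) auto
    also have "\<dots> \<le> U 1" by (rule golomb_blocks_le)
    finally show ?thesis .
  qed
  have "summable golomb_term" by (rule summableI_nonneg_bounded[OF nonneg bounded])
  then show ?thesis using suminf_le_const bounded by blast
qed

end

section \<open>From the expected cost to the penalty\<close>

context
  fixes p :: "nat \<Rightarrow> real" and a :: real and n :: "nat \<Rightarrow> nat"
  assumes p_nonneg: "\<And>i. 0 \<le> p i" and p_sums: "p sums 1" and a_pos: "0 < a"
begin

lemma weight_eq_geom_sum: "p i * a ^ n i = p i + (a - 1) * (p i * geom_sum a (n i))"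
  by (simp add: power_eq_geom_sum algebra_simps)

lemma cost_nonneg: "0 \<le> p i * geom_sum a (n i)"
  using p_nonneg geom_sum_nonneg a_pos by simp

lemma weight_nonneg: "0 \<le> p i * a ^ n i"
  using p_nonneg a_pos by simp

lemma penalty_eq_expected_cost:
  assumes summable: "summable (\<lambda>i. p i * geom_sum a (n i))"
  defines "C \<equiv> \<Sum>i. p i * geom_sum a (n i)"
  shows "0 < 1 + (a - 1) * C"
    and "penalty a p n = ereal (if a = 1 then C else log a (1 + (a - 1) * C))"
proof -
  have weights_sums: "(\<lambda>i. p i * a ^ n i) sums (1 + (a - 1) * C)"
    unfolding weight_eq_geom_sum C_def using p_sums summable by (intro sums_add sums_mult summable_sums)
  have weights_sum: "(\<Sum>i. p i * a ^ n i) = 1 + (a - 1) * C"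
    using weights_sums by (rule sums_unique[symmetric])
  have "\<exists>j. p j \<noteq> 0"
  proof (rule ccontr)
    assume "\<nexists>j. p j \<noteq> 0"
    then have "(\<lambda>_. 0 :: real) sums 1" using p_sums by (simp add: fun_eq_iff[symmetric])
    then show False using sums_unique2[OF sums_zero] by fastforce
  qed
  then obtain j where "p j \<noteq> 0" by blast
  then have "0 < p j" using p_nonneg[of j] by linarith
  then have "0 < p j * a ^ n j" using a_pos by simp
  then have "0 < (\<Sum>i. p i * a ^ n i)"
    by (intro suminf_pos2[OF sums_summable[OF weights_sums] weight_nonneg])
  then show pos: "0 < 1 + (a - 1) * C" using weights_sum by simp
  show "penalty a p n = ereal (if a = 1 then C else log a (1 + (a - 1) * C))"
  proof (cases "a = 1")
    case True
    have "(\<Sum>i. ennreal (p i * geom_sum a (n i))) = ennreal C"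
      unfolding C_def by (rule suminf_ennreal2[OF cost_nonneg summable])
    moreover have "0 \<le> C"
      unfolding C_def by (rule suminf_nonneg[OF summable cost_nonneg])
    ultimately show ?thesis using True by (simp add: penalty_def)
  next
    case False
    have "(\<Sum>i. ennreal (p i * a ^ n i)) = ennreal (\<Sum>i. p i * a ^ n i)"
      by (rule suminf_ennreal2[OF weight_nonneg sums_summable[OF weights_sums]])
    then have "(\<Sum>i. ennreal (p i * a ^ n i)) = ennreal (1 + (a - 1) * C)"
      by (simp only: weights_sum)
    then show ?thesis using False pos by (simp add: penalty_def)
  qed
qed

lemma penalty_eq_infinity:
  assumes not_summable: "\<not> summable (\<lambda>i. p i * geom_sum a (n i))"
  shows "penalty a p n = \<infinity>"
proof (cases "a = 1")
  case True
  have "(\<Sum>i. ennreal (p i * geom_sum a (n i))) = top"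
    using summable_suminf_not_top[of "\<lambda>i. p i * geom_sum a (n i)"] cost_nonneg not_summable
    by blast
  then show ?thesis using True by (simp add: penalty_def)
next
  case False
  have "1 < a"
  proof (rule ccontr)
    assume "\<not> 1 < a"
    then have "a < 1" using False by simp
    have bound: "p i * geom_sum a (n i) \<le> p i * (1 / (1 - a))" for i
    proof -
      have "(1 - a) * geom_sum a (n i) = 1 - a ^ n i"
        using power_eq_geom_sum[of a "n i"] by (simp add: algebra_simps)
      then have "(1 - a) * geom_sum a (n i) \<le> 1"
        using a_pos by simp
      then show ?thesis
        using \<open>a < 1\<close> p_nonneg by (intro mult_left_mono) (auto simp: field_simps)
    qed
    have "summable (\<lambda>i. p i * (1 / (1 - a)))"
      using p_sums by (intro summable_mult2 sums_summable)
    then have "summable (\<lambda>i. p i * geom_sum a (n i))"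
    proof (rule summable_comparison_test')
      show "norm (p i * geom_sum a (n i)) \<le> p i * (1 / (1 - a))" for i
        using bound[of i] cost_nonneg[of i] by simp
    qed
    then show False using not_summable by simp
  qed
  have "\<not> summable (\<lambda>i. p i * a ^ n i)"
  proof
    assume "summable (\<lambda>i. p i * a ^ n i)"
    then have "summable (\<lambda>i. (p i * a ^ n i - p i) / (a - 1))"
      using p_sums by (intro summable_divide summable_diff sums_summable) auto
    then show False
      using not_summable \<open>1 < a\<close> by (simp add: weight_eq_geom_sum)
  qed
  then have "(\<Sum>i. ennreal (p i * a ^ n i)) = top"
    using summable_suminf_not_top[of "\<lambda>i. p i * a ^ n i"] weight_nonneg by blast
  then show ?thesis using False by (simp add: penalty_def)
qed

end

lemma log_affine_mono:
  assumes "0 < a" "a \<noteq> 1" "0 < 1 + (a - 1) * x" "0 < 1 + (a - 1) * y" "x \<le> y"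
  shows "log a (1 + (a - 1) * x) \<le> log a (1 + (a - 1) * y)"
proof (cases "1 < a")
  case True
  then show ?thesis using assms by (simp add: mult_left_mono)
next
  case False
  then have "ln a < 0" and "1 + (a - 1) * y \<le> 1 + (a - 1) * x"
    using assms by (auto simp: mult_left_mono_neg)
  then show ?thesis
    using assms by (simp add: log_def divide_right_mono_neg)
qed

theorem optimal_code_if_expected_cost_le:
  fixes p :: "nat \<Rightarrow> real"
  assumes "\<And>i. 0 \<le> p i" "p sums 1" "0 < a" "prefix_code c"
    and summable: "summable (\<lambda>i. p i * geom_sum a (length (c i)))"
    and le: "\<And>c'. prefix_code c' \<Longrightarrow> summable (\<lambda>i. p i * geom_sum a (length (c' i))) \<Longrightarrow>
               (\<Sum>i. p i * geom_sum a (length (c i))) \<le> (\<Sum>i. p i * geom_sum a (length (c' i)))"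
  shows "optimal_code a p c"
  unfolding optimal_code_def
proof (intro conjI allI impI)
  fix c' assume "prefix_code c'"
  show "penalty a p (\<lambda>i. length (c i)) \<le> penalty a p (\<lambda>i. length (c' i))"
  proof (cases "summable (\<lambda>i. p i * geom_sum a (length (c' i)))")
    case True
    then show ?thesis
      using penalty_eq_expected_cost[OF assms(1-3)] summable le[OF \<open>prefix_code c'\<close> True]
        log_affine_mono[OF \<open>0 < a\<close>] by auto
  next
    case False
    then show ?thesis using penalty_eq_infinity[OF assms(1-3)] by simp
  qed
qed (rule \<open>prefix_code c\<close>)

theorem (in golomb_regime) golomb_optimal: "optimal_code a (\<lambda>i. (1 - q) * q ^ i) (golomb k)"
proof (rule optimal_code_if_expected_cost_le)
  fix c assume "prefix_code c" "summable (\<lambda>i. (1 - q) * q ^ i * geom_sum a (length (c i)))"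
  then show "(\<Sum>i. golomb_term i) \<le> (\<Sum>i. (1 - q) * q ^ i * geom_sum a (length (c i)))"
    using golomb_expected_cost greedy_cost_le_expected_cost by (blast intro: order_trans)
qed (use golomb_expected_cost q_pos q_less_1 a_pos prefix_code_golomb k_pos geometric_distribution_sums in auto)

section \<open>Choosing the Golomb parameter\<close>

lemma exists_bracketing_index:
  fixes f :: "nat \<Rightarrow> 'a::linorder"
  assumes "f n \<le> x" "x < f 0"
  shows "\<exists>k\<ge>1. f k \<le> x \<and> x < f (k - 1)"
proof -
  obtain k where "f k \<le> x" and below: "\<forall>i<k. \<not> f i \<le> x"
    using ex_least_nat_le[of "\<lambda>n. f n \<le> x", OF assms(1)] by blast
  moreover have "k \<noteq> 0"
  proof
    assume "k = 0"
    then show False using \<open>f k \<le> x\<close> assms(2) by simp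
  qed
  moreover from this have "x < f (k - 1)" using below by (simp add: not_le)
  ultimately show ?thesis by (intro exI[of _ k]) auto
qed

lemma no_bracket_imp_unary_bracket:
  fixes \<theta> a :: real
  assumes "0 < \<theta>" "\<theta> < 1" "0 < a"
    and no_bracket: "\<nexists>k. k \<ge> 1 \<and> \<theta> ^ k + \<theta> ^ (k + 1) \<le> 1 / a \<and> 1 / a < \<theta> ^ (k - 1) + \<theta> ^ k"
  shows "\<theta> ^ 1 + \<theta> ^ (1 + 1) \<le> 1 / a"
proof -
  define f where "f k = \<theta> ^ k + \<theta> ^ (k + 1)" for k
  obtain n where "\<theta> ^ n < 1 / (2 * a)"
    using real_arch_pow_inv[of "1 / (2 * a)" \<theta>] assms by auto
  moreover have "\<theta> ^ (n + 1) \<le> \<theta> ^ n"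
    using assms by (intro power_decreasing) auto
  ultimately have "f n \<le> 1 / a"
    by (simp add: f_def field_simps)
  have "\<not> (f k \<le> 1 / a \<and> 1 / a < f (k - 1))" if "k \<ge> 1" for k
  proof -
    have "f (k - 1) = \<theta> ^ (k - 1) + \<theta> ^ k" using that by (simp add: f_def)
    then show ?thesis using no_bracket that by (simp add: f_def[of k])
  qed
  then have "\<not> 1 / a < f 0"
    using exists_bracketing_index[of f n "1 / a"] \<open>f n \<le> 1 / a\<close> by blast
  moreover have "f 1 \<le> f 0"
    using assms by (simp add: f_def power2_eq_square mult_le_one less_imp_le)
  ultimately show ?thesis by (simp add: f_def)
qed

lemma golomb_regimeI:
  fixes \<theta> a :: real
  assumes "0 < \<theta>" "\<theta> < 1" "0 < a" "k \<ge> 1" "\<theta> ^ k + \<theta> ^ (k + 1) \<le> 1 / a"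
    and "k = 1 \<or> 1 / a < \<theta> ^ (k - 1) + \<theta> ^ k"
  shows "golomb_regime \<theta> a k"
  using assms by unfold_locales (auto simp: field_simps)

theorem theorem1:
  fixes \<theta> a :: real
  assumes "0 < \<theta>" and "\<theta> < 1" and "0 < a"
  defines "p \<equiv> (\<lambda>i::nat. (1 - \<theta>) * \<theta> ^ i)"
  shows "(\<forall>k::nat. k \<ge> 1 \<and> \<theta> ^ k + \<theta> ^ (k + 1) \<le> 1 / a \<and> 1 / a < \<theta> ^ (k - 1) + \<theta> ^ k
            \<longrightarrow> optimal_code a p (golomb k))
       \<and> ((\<nexists>k::nat. k \<ge> 1 \<and> \<theta> ^ k + \<theta> ^ (k + 1) \<le> 1 / a \<and> 1 / a < \<theta> ^ (k - 1) + \<theta> ^ k)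
            \<longrightarrow> optimal_code a p (golomb 1))"
proof (intro conjI allI impI)
  fix k :: nat
  assume "k \<ge> 1 \<and> \<theta> ^ k + \<theta> ^ (k + 1) \<le> 1 / a \<and> 1 / a < \<theta> ^ (k - 1) + \<theta> ^ k"
  then interpret golomb_regime \<theta> a k
    using assms by (intro golomb_regimeI) auto
  show "optimal_code a p (golomb k)" using golomb_optimal by (simp add: p_def)
next
  assume "\<nexists>k::nat. k \<ge> 1 \<and> \<theta> ^ k + \<theta> ^ (k + 1) \<le> 1 / a \<and> 1 / a < \<theta> ^ (k - 1) + \<theta> ^ k"
  then interpret golomb_regime \<theta> a 1
    using assms no_bracket_imp_unary_bracket by (intro golomb_regimeI) auto
  show "optimal_code a p (golomb 1)" using golomb_optimal by (simp add: p_def)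
qed

end
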